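(* Consider the scalar linear system $$\frac{dx(t)}{dt} = A\,x(t) + B_p\,p(t) + B_d\,d(t),\qquad t\in\mathcal{T}=[0,t_f],$$ with scalar constants $A\le 0$ and $B_p\ge 0$, a given disturbance $d$ and a given initial state $x(0)=x_0$. Fix bounds $0\le p_{\min}\le p_{\max}$ and $x_{\min}\le x_{\max}$. Let $p_+$ and $p_-$ be feasible power trajectories: $p_{\min}\le p_\pm(t)\le p_{\max}$ for all $t\in\mathcal{T}$, and the resulting states $x_\pm$ (same $x_0$ and $d$) satisfy $x_{\min}\le x_\pm(t)\le x_{\max}$ for all $t\in\mathcal{T}$. Let $p_a$ be a power trajectory with $p_{\min}\le p_a(t)\le p_{\max}$ for all $t$, and let $x_a$ be the resulting state (same $x_0$ and $d$). If for all $t\in\mathcal{T}$ $$\mathrm{E}^{\mathrm{TI}}_{\mathrm{down}}(t):=\int_0^t e^{-A\tau}p_-(\tau)\,d\tau \;\le\; \int_0^t p_a(\tau)\,d\tau \;\le\; \int_0^t e^{A(t-\tau)}p_+(\tau)\,d\tau =: \mathrm{E}^{\mathrm{TI}}_{\mathrm{up}}(t),$$ then $x_{\min}\le x_a(t)\le x_{\max}$ for all $t\in\mathcal{T}$; that is, $\mathrm{E}^{\mathrm{TI}}_{\mathrm{up}}$ and $\mathrm{E}^{\mathrm{TI}}_{\mathrm{down}}$ are trajectory-independent energy flexibility bounds.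
   Context: All power trajectories are (integrable) functions on $\mathcal{T}$; states are the solutions $x(t)=e^{At}x_0+\int_0^t e^{A(t-\tau)}(B_d d(\tau)+B_p p(\tau))\,d\tau$ of the state equation. "Trajectory-independent (TI) energy bounds" means: every power trajectory satisfying the power constraints whose cumulative energy $\int_0^t p$ lies between the bounds for all $t$ satisfies the state constraints. *)

theory Defs
  imports "HOL-Analysis.Analysis"
begin

text \<open>State of the scalar system dx/dt = A x + B_p p + B_d d with x(0) = x0,
  given by the variation-of-constants formula.\<close>
definition state ::
  "real \<Rightarrow> real \<Rightarrow> real \<Rightarrow> real \<Rightarrow> (real \<Rightarrow> real) \<Rightarrow> (real \<Rightarrow> real) \<Rightarrow> real \<Rightarrow> real" where
  "state A Bp Bd x0 d p t =
     exp (A * t) * x0 + integral {0..t} (\<lambda>\<tau>. exp (A * (t - \<tau>)) * (Bd * d \<tau> + Bp * p \<tau>))"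

definition energy :: "(real \<Rightarrow> real) \<Rightarrow> real \<Rightarrow> real" where
  "energy p t = integral {0..t} p"

definition E_TI_up :: "real \<Rightarrow> (real \<Rightarrow> real) \<Rightarrow> real \<Rightarrow> real" where
  "E_TI_up A pplus t = integral {0..t} (\<lambda>\<tau>. exp (A * (t - \<tau>)) * pplus \<tau>)"

definition E_TI_down :: "real \<Rightarrow> (real \<Rightarrow> real) \<Rightarrow> real \<Rightarrow> real" where
  "E_TI_down A pminus t = integral {0..t} (\<lambda>\<tau>. exp (- A * \<tau>) * pminus \<tau>)"

end

theory Submission
  imports Defs
begin

text \<open>Fix a time \<open>t\<close> and write \<open>W(p) = \<integral>\<^sub>0\<^sup>t exp (A (t - \<tau>)) p(\<tau>) d\<tau>\<close>, which is
  \<open>E_TI_up A p t\<close>. The state at \<open>t\<close> depends on the power trajectory \<open>p\<close> only through \<open>W(p)\<close>, and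
  monotonically so because \<open>B\<^sub>p \<ge> 0\<close>. As \<open>A \<le> 0\<close>, the weight \<open>exp (A (t - \<tau>))\<close> lies between
  \<open>exp (A t)\<close> and \<open>1\<close>, so for \<open>p\<^sub>a \<ge> 0\<close> we have \<open>exp (A t) \<integral>\<^sub>0\<^sup>t p\<^sub>a \<le> W(p\<^sub>a) \<le> \<integral>\<^sub>0\<^sup>t p\<^sub>a\<close>.
  Together with the energy bounds this gives
  \<open>W(p\<^sub>-) = exp (A t) E\<^sub>d\<^sub>o\<^sub>w\<^sub>n(t) \<le> W(p\<^sub>a) \<le> E\<^sub>u\<^sub>p(t) = W(p\<^sub>+)\<close>, hence \<open>x\<^sub>-(t) \<le> x\<^sub>a(t) \<le> x\<^sub>+(t)\<close>.\<close>

lemma integrable_on_mono_on_mult: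
  fixes f g :: "real \<Rightarrow> real"
  assumes f: "f integrable_on {a..b}" and g: "mono_on {a..b} g"
  shows "(\<lambda>x. g x * f x) integrable_on {a..b}"
proof (cases "a \<le> b")
  case True
  have "\<And>x y. \<lbrakk>a \<le> x; x \<le> y; y \<le> b\<rbrakk> \<Longrightarrow> g x \<le> g y"
    using g by (auto intro: mono_onD)
  then obtain c where
    "((\<lambda>x. g x * f x) has_integral (g a * integral {a..c} f + g b * integral {c..b} f)) {a..b}"
    using second_mean_value_theorem_full[OF f True] by metis
  then show ?thesis by blast
qed (simp add: integrable_on_empty)

lemma integrable_on_exp_weight:
  fixes f :: "real \<Rightarrow> real"
  assumes "A \<le> 0" and "f integrable_on {a..b}"
  shows "(\<lambda>\<tau>. exp (A * (t - \<tau>)) * f \<tau>) integrable_on {a..b}"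
proof (rule integrable_on_mono_on_mult[OF assms(2)])
  show "mono_on {a..b} (\<lambda>\<tau>. exp (A * (t - \<tau>)))"
    using \<open>A \<le> 0\<close> by (intro mono_onI) (simp add: mult_left_mono_neg)
qed

lemma E_TI_up_eq_exp_mult_E_TI_down: "E_TI_up A p t = exp (A * t) * E_TI_down A p t"
proof -
  have "E_TI_up A p t = integral {0..t} (\<lambda>\<tau>. exp (A * t) * (exp (- A * \<tau>) * p \<tau>))"
    unfolding E_TI_up_def by (intro integral_cong) (simp add: right_diff_distrib exp_add[symmetric])
  then show ?thesis
    unfolding E_TI_down_def by simp
qed

lemma E_TI_up_le_energy:
  assumes "A \<le> 0" and p: "p integrable_on {0..t}" "\<And>\<tau>. \<tau> \<in> {0..t} \<Longrightarrow> 0 \<le> p \<tau>"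
  shows "E_TI_up A p t \<le> energy p t"
  unfolding E_TI_up_def energy_def
proof (rule integral_le[OF integrable_on_exp_weight[OF \<open>A \<le> 0\<close> p(1)] p(1)])
  fix \<tau> assume \<tau>: "\<tau> \<in> {0..t}"
  then have "exp (A * (t - \<tau>)) \<le> 1"
    using \<open>A \<le> 0\<close> by (simp add: mult_nonpos_nonneg)
  then show "exp (A * (t - \<tau>)) * p \<tau> \<le> p \<tau>"
    using p(2)[OF \<tau>] by (simp add: mult_left_le_one_le)
qed

lemma exp_mult_energy_le_E_TI_up:
  assumes "A \<le> 0" and p: "p integrable_on {0..t}" "\<And>\<tau>. \<tau> \<in> {0..t} \<Longrightarrow> 0 \<le> p \<tau>"
  shows "exp (A * t) * energy p t \<le> E_TI_up A p t"
proof -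
  have "exp (A * t) * energy p t = integral {0..t} (\<lambda>\<tau>. exp (A * t) * p \<tau>)"
    unfolding energy_def by simp
  also have "\<dots> \<le> E_TI_up A p t"
    unfolding E_TI_up_def
  proof (rule integral_le)
    show "(\<lambda>\<tau>. exp (A * t) * p \<tau>) integrable_on {0..t}"
      using p(1) by (rule integrable_on_mult_right)
    show "(\<lambda>\<tau>. exp (A * (t - \<tau>)) * p \<tau>) integrable_on {0..t}"
      using \<open>A \<le> 0\<close> p(1) by (rule integrable_on_exp_weight)
    fix \<tau> assume \<tau>: "\<tau> \<in> {0..t}"
    then have "exp (A * t) \<le> exp (A * (t - \<tau>))"
      using \<open>A \<le> 0\<close> by (simp add: right_diff_distrib mult_nonpos_nonneg)
    then show "exp (A * t) * p \<tau> \<le> exp (A * (t - \<tau>)) * p \<tau>"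
      using p(2)[OF \<tau>] by (rule mult_right_mono)
  qed
  finally show ?thesis .
qed

lemma state_eq_E_TI_up:
  assumes "A \<le> 0" and "d integrable_on {0..t}" "p integrable_on {0..t}"
  shows "state A Bp Bd x0 d p t =
    exp (A * t) * x0 + integral {0..t} (\<lambda>\<tau>. exp (A * (t - \<tau>)) * (Bd * d \<tau>)) + Bp * E_TI_up A p t"
proof -
  have "(\<lambda>\<tau>. exp (A * (t - \<tau>)) * (Bd * d \<tau>)) integrable_on {0..t}"
    using assms(1,2) by (intro integrable_on_exp_weight integrable_on_mult_right)
  moreover have "(\<lambda>\<tau>. Bp * (exp (A * (t - \<tau>)) * p \<tau>)) integrable_on {0..t}"
    using assms(1,3) by (intro integrable_on_mult_right integrable_on_exp_weight)
  ultimately show ?thesis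
    unfolding state_def E_TI_up_def
    by (simp add: distrib_left integral_add add.assoc mult.left_commute)
qed

lemma state_mono_E_TI_up:
  assumes "A \<le> 0" "0 \<le> Bp" and "d integrable_on {0..t}" "p integrable_on {0..t}" "q integrable_on {0..t}"
    and "E_TI_up A p t \<le> E_TI_up A q t"
  shows "state A Bp Bd x0 d p t \<le> state A Bp Bd x0 d q t"
  using assms by (simp add: state_eq_E_TI_up mult_left_mono)

theorem theorem1:
  fixes A Bp Bd x0 tf pmin pmax xmin xmax :: real
    and d pplus pminus pa :: "real \<Rightarrow> real"
  assumes tf: "0 \<le> tf"
    and A: "A \<le> 0" and Bp: "Bp \<ge> 0"
    and d_int: "d integrable_on {0..tf}"
    and p_bounds: "0 \<le> pmin" "pmin \<le> pmax"
    and x_bounds: "xmin \<le> xmax"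
    and pplus_int: "pplus integrable_on {0..tf}"
    and pplus_p: "\<And>t. t \<in> {0..tf} \<Longrightarrow> pmin \<le> pplus t \<and> pplus t \<le> pmax"
    and pplus_x: "\<And>t. t \<in> {0..tf} \<Longrightarrow>
                    xmin \<le> state A Bp Bd x0 d pplus t \<and> state A Bp Bd x0 d pplus t \<le> xmax"
    and pminus_int: "pminus integrable_on {0..tf}"
    and pminus_p: "\<And>t. t \<in> {0..tf} \<Longrightarrow> pmin \<le> pminus t \<and> pminus t \<le> pmax"
    and pminus_x: "\<And>t. t \<in> {0..tf} \<Longrightarrow>
                    xmin \<le> state A Bp Bd x0 d pminus t \<and> state A Bp Bd x0 d pminus t \<le> xmax"
    and pa_int: "pa integrable_on {0..tf}"
    and pa_p: "\<And>t. t \<in> {0..tf} \<Longrightarrow> pmin \<le> pa t \<and> pa t \<le> pmax"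
    and energy_bounds: "\<And>t. t \<in> {0..tf} \<Longrightarrow>
                    E_TI_down A pminus t \<le> energy pa t \<and> energy pa t \<le> E_TI_up A pplus t"
  shows "\<forall>t \<in> {0..tf}. xmin \<le> state A Bp Bd x0 d pa t \<and> state A Bp Bd x0 d pa t \<le> xmax"
proof
  fix t assume t: "t \<in> {0..tf}"
  have sub: "{0..t} \<subseteq> {0..tf}"
    using t by auto
  have ints: "d integrable_on {0..t}" "pa integrable_on {0..t}"
    "pplus integrable_on {0..t}" "pminus integrable_on {0..t}"
    using d_int pa_int pplus_int pminus_int by (auto intro: integrable_on_subinterval[OF _ sub])
  have pa_nonneg: "\<And>\<tau>. \<tau> \<in> {0..t} \<Longrightarrow> 0 \<le> pa \<tau>"
    using pa_p sub p_bounds by force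
  have "E_TI_up A pminus t = exp (A * t) * E_TI_down A pminus t"
    by (rule E_TI_up_eq_exp_mult_E_TI_down)
  also have "\<dots> \<le> exp (A * t) * energy pa t"
    using energy_bounds[OF t] by simp
  also have "\<dots> \<le> E_TI_up A pa t"
    using A ints(2) pa_nonneg by (rule exp_mult_energy_le_E_TI_up)
  finally have "state A Bp Bd x0 d pminus t \<le> state A Bp Bd x0 d pa t"
    using A Bp ints by (intro state_mono_E_TI_up)
  moreover have "E_TI_up A pa t \<le> E_TI_up A pplus t"
    using E_TI_up_le_energy[OF A ints(2) pa_nonneg] energy_bounds[OF t] by linarith
  then have "state A Bp Bd x0 d pa t \<le> state A Bp Bd x0 d pplus t"
    using A Bp ints by (intro state_mono_E_TI_up)
  ultimately show "xmin \<le> state A Bp Bd x0 d pa t \<and> state A Bp Bd x0 d pa t \<le> xmax"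
    using pminus_x[OF t] pplus_x[OF t] by linarith
qed

end
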